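(* Let $X$ be a connected thin combinatorial $2$-complex that satisfies the Perimeter-reduction hypothesis, and let $\mathcal H\le\mathrm{Aut}(X)$ be finitely generated relative to a finite collection of $0$-cell stabilizers. Then there exists a connected $\mathcal H$-cocompact subcomplex $Y\subset X$ with no missing $3$-shells.
   Context: $\mathrm{Aut}(X)$ is the group of cellular automorphisms. A side at a $1$-cell $x$ is a pair $(R,r)$, $R$ a $2$-cell, $r$ a $1$-cell of $\partial R$ mapping to $x$; $X$ is thin if each $1$-cell has finitely many sides. For a subcomplex $Y$, $\mathrm{Missing}_X(Y,x)$ is the set of sides at $x$ not factoring through $Y$. $Y$ is $\mathcal H$-cocompact if $\mathcal H$-invariant with finitely many $\mathcal H$-orbits of cells; then $\mathrm{per}(Y,\mathcal H)=\sum_i|\mathrm{Missing}_X(Y,y_i)|$ over representatives $y_i$ of the $\mathcal H$-orbits of $1$-cells of $Y$. A piece is a nontrivial path factoring through boundary cycles of two $2$-cells in essentially distinct ways (no compatible homeomorphism of boundary cycles). A missing $3$-shell of $Y$ is a $2$-cell $R\not\subset Y$ with $\partial R=QS$, $Q$ a path in $Y$, $S$ a concatenation of at most $3$ pieces. $\mathcal H$ is finitely generated relative to a finite collection of $0$-cell stabilizers if for some $0$-cells $v_1,\dots,v_n$ and finite $S\subset\mathcal H$, $S\cup\bigcup_i\mathrm{Stab}_{\mathcal H}(v_i)$ generates $\mathcal H$. $X$ satisfies the Perimeter-reduction hypothesis if for every such relatively finitely generated $\mathcal H$ and every connected $\mathcal H$-cocompact $Y\subset X$ having a missing $3$-shell,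 there is a connected $\mathcal H$-cocompact $Y'\subset X$ with $\mathrm{per}(Y',\mathcal H)<\mathrm{per}(Y,\mathcal H)$. *)

theory Defs
  imports Main
begin

text \<open>A combinatorial 2-complex is given by a set of 0-cells (vertices), a set of
darts (oriented 1-cells; each 1-cell is a pair {d, dinv d} of opposite darts),
a set of 2-cells, and for each 2-cell R its attaching map: a closed, nonempty
combinatorial path (cyclic list of darts) bd R.  Position i of bd R is the i-th
1-cell of the boundary circle of R, and bd R ! i is the dart it maps to.\<close>

record ('v,'d,'f) cx2 =
  verts :: "'v set"
  darts :: "'d set"
  faces :: "'f set"
  src   :: "'d \<Rightarrow> 'v"
  dinv  :: "'d \<Rightarrow> 'd"
  bd    :: "'f \<Rightarrow> 'd list"

definition tgt :: "('v,'d,'f) cx2 \<Rightarrow> 'd \<Rightarrow> 'v" where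
  "tgt X d = src X (dinv X d)"

definition is_path :: "('v,'d,'f) cx2 \<Rightarrow> 'd list \<Rightarrow> bool" where
  "is_path X P \<longleftrightarrow> set P \<subseteq> darts X \<and>
     (\<forall>i. Suc i < length P \<longrightarrow> tgt X (P ! i) = src X (P ! Suc i))"

definition complex2 :: "('v,'d,'f) cx2 \<Rightarrow> bool" where
  "complex2 X \<longleftrightarrow>
     (\<forall>d\<in>darts X. dinv X d \<in> darts X \<and> dinv X (dinv X d) = d \<and> dinv X d \<noteq> d
                   \<and> src X d \<in> verts X) \<and>
     (\<forall>R\<in>faces X. bd X R \<noteq> [] \<and> is_path X (bd X R) \<and>
                   tgt X (last (bd X R)) = src X (hd (bd X R)))"

definition edge :: "('v,'d,'f) cx2 \<Rightarrow> 'd \<Rightarrow> 'd set" where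
  "edge X d = {d, dinv X d}"

definition one_cells :: "('v,'d,'f) cx2 \<Rightarrow> 'd set set" where
  "one_cells X = edge X ` darts X"

definition sides :: "('v,'d,'f) cx2 \<Rightarrow> 'd set \<Rightarrow> ('f \<times> nat) set" where
  "sides X x = {(R, i). R \<in> faces X \<and> i < length (bd X R) \<and> edge X (bd X R ! i) = x}"

definition thin :: "('v,'d,'f) cx2 \<Rightarrow> bool" where
  "thin X \<longleftrightarrow> (\<forall>x\<in>one_cells X. finite (sides X x))"

type_synonym ('v,'d,'f) subcx = "'v set \<times> 'd set \<times> 'f set"

definition sV :: "('v,'d,'f) subcx \<Rightarrow> 'v set" where "sV Y = fst Y"
definition sD :: "('v,'d,'f) subcx \<Rightarrow> 'd set" where "sD Y = fst (snd Y)"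
definition sF :: "('v,'d,'f) subcx \<Rightarrow> 'f set" where "sF Y = snd (snd Y)"

definition is_subcx :: "('v,'d,'f) cx2 \<Rightarrow> ('v,'d,'f) subcx \<Rightarrow> bool" where
  "is_subcx X Y \<longleftrightarrow> sV Y \<subseteq> verts X \<and> sD Y \<subseteq> darts X \<and> sF Y \<subseteq> faces X \<and>
     (\<forall>d\<in>sD Y. dinv X d \<in> sD Y \<and> src X d \<in> sV Y) \<and>
     (\<forall>R\<in>sF Y. set (bd X R) \<subseteq> sD Y)"

definition the_whole :: "('v,'d,'f) cx2 \<Rightarrow> ('v,'d,'f) subcx" where
  "the_whole X = (verts X, darts X, faces X)"

definition connected_sub :: "('v,'d,'f) cx2 \<Rightarrow> ('v,'d,'f) subcx \<Rightarrow> bool" where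
  "connected_sub X Y \<longleftrightarrow> sV Y \<noteq> {} \<and>
     (\<forall>u\<in>sV Y. \<forall>v\<in>sV Y. (u, v) \<in> {(src X d, tgt X d) | d. d \<in> sD Y}\<^sup>*)"

definition connected_cx :: "('v,'d,'f) cx2 \<Rightarrow> bool" where
  "connected_cx X \<longleftrightarrow> connected_sub X (the_whole X)"

record ('v,'d,'f) aut =
  av :: "'v \<Rightarrow> 'v"
  ad :: "'d \<Rightarrow> 'd"
  af :: "'f \<Rightarrow> 'f"

text \<open>A cellular automorphism: bijections on cells (identity off the complex, for
extensionality) commuting with incidence, and carrying the boundary cycle of each
2-cell onto the boundary cycle of its image, up to rotation and reflection of the
boundary circle.\<close>
definition is_aut :: "('v,'d,'f) cx2 \<Rightarrow> ('v,'d,'f) aut \<Rightarrow> bool" where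
  "is_aut X g \<longleftrightarrow>
     bij_betw (av g) (verts X) (verts X) \<and> bij_betw (ad g) (darts X) (darts X) \<and>
     bij_betw (af g) (faces X) (faces X) \<and>
     (\<forall>v. v \<notin> verts X \<longrightarrow> av g v = v) \<and> (\<forall>d. d \<notin> darts X \<longrightarrow> ad g d = d) \<and>
     (\<forall>R. R \<notin> faces X \<longrightarrow> af g R = R) \<and>
     (\<forall>d\<in>darts X. src X (ad g d) = av g (src X d) \<and> ad g (dinv X d) = dinv X (ad g d)) \<and>
     (\<forall>R\<in>faces X. \<exists>k. bd X (af g R) = rotate k (map (ad g) (bd X R)) \<or>
                       bd X (af g R) = rotate k (rev (map (dinv X \<circ> ad g) (bd X R))))"

definition aut_id :: "('v,'d,'f) aut" where
  "aut_id = \<lparr>av = id, ad = id, af = id\<rparr>"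

definition aut_comp :: "('v,'d,'f) aut \<Rightarrow> ('v,'d,'f) aut \<Rightarrow> ('v,'d,'f) aut" where
  "aut_comp g h = \<lparr>av = av g \<circ> av h, ad = ad g \<circ> ad h, af = af g \<circ> af h\<rparr>"

definition aut_subgroup :: "('v,'d,'f) cx2 \<Rightarrow> ('v,'d,'f) aut set \<Rightarrow> bool" where
  "aut_subgroup X H \<longleftrightarrow> (\<forall>g\<in>H. is_aut X g) \<and> aut_id \<in> H \<and>
     (\<forall>g\<in>H. \<forall>h\<in>H. aut_comp g h \<in> H) \<and>
     (\<forall>g\<in>H. \<exists>h\<in>H. aut_comp h g = aut_id)"

definition generates :: "('v,'d,'f) cx2 \<Rightarrow> ('v,'d,'f) aut set \<Rightarrow> ('v,'d,'f) aut set \<Rightarrow> bool" where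
  "generates X A H \<longleftrightarrow> A \<subseteq> H \<and>
     (\<forall>K. K \<subseteq> H \<and> aut_subgroup X K \<and> A \<subseteq> K \<longrightarrow> K = H)"

definition stab :: "('v,'d,'f) aut set \<Rightarrow> 'v \<Rightarrow> ('v,'d,'f) aut set" where
  "stab H v = {g \<in> H. av g v = v}"

definition rel_fin_gen :: "('v,'d,'f) cx2 \<Rightarrow> ('v,'d,'f) aut set \<Rightarrow> bool" where
  "rel_fin_gen X H \<longleftrightarrow> (\<exists>vs S. finite vs \<and> vs \<subseteq> verts X \<and> finite S \<and> S \<subseteq> H \<and>
      generates X (S \<union> (\<Union>v\<in>vs. stab H v)) H)"

definition orbV :: "('v,'d,'f) aut set \<Rightarrow> 'v \<Rightarrow> 'v set" where
  "orbV H v = {av g v | g. g \<in> H}"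

definition orb1 :: "('v,'d,'f) cx2 \<Rightarrow> ('v,'d,'f) aut set \<Rightarrow> 'd set \<Rightarrow> 'd set set" where
  "orb1 X H x = {edge X (ad g d) | g d. g \<in> H \<and> d \<in> x}"

definition orbF :: "('v,'d,'f) aut set \<Rightarrow> 'f \<Rightarrow> 'f set" where
  "orbF H R = {af g R | g. g \<in> H}"

definition invariant :: "('v,'d,'f) aut set \<Rightarrow> ('v,'d,'f) subcx \<Rightarrow> bool" where
  "invariant H Y \<longleftrightarrow> (\<forall>g\<in>H. av g ` sV Y \<subseteq> sV Y \<and> ad g ` sD Y \<subseteq> sD Y \<and> af g ` sF Y \<subseteq> sF Y)"

definition cocompact :: "('v,'d,'f) cx2 \<Rightarrow> ('v,'d,'f) aut set \<Rightarrow> ('v,'d,'f) subcx \<Rightarrow> bool" where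
  "cocompact X H Y \<longleftrightarrow> invariant H Y \<and> finite (orbV H ` sV Y) \<and>
     finite (orb1 X H ` edge X ` sD Y) \<and> finite (orbF H ` sF Y)"

definition Missing :: "('v,'d,'f) cx2 \<Rightarrow> ('v,'d,'f) subcx \<Rightarrow> 'd set \<Rightarrow> ('f \<times> nat) set" where
  "Missing X Y x = {(R, i). (R, i) \<in> sides X x \<and> R \<notin> sF Y}"

definition per :: "('v,'d,'f) cx2 \<Rightarrow> ('v,'d,'f) subcx \<Rightarrow> ('v,'d,'f) aut set \<Rightarrow> nat" where
  "per X Y H = (\<Sum>ob\<in>orb1 X H ` edge X ` sD Y. card (Missing X Y (SOME x. x \<in> ob)))"

text \<open>Oriented positions on the boundary circle of R: (k, True) is the k-th 1-cell
of the circle (indices mod the length) traversed in the direction of bd R,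
(k, False) the same 1-cell traversed backwards.\<close>
definition odart :: "('v,'d,'f) cx2 \<Rightarrow> 'f \<Rightarrow> int \<times> bool \<Rightarrow> 'd" where
  "odart X R p = (let d = bd X R ! nat (fst p mod int (length (bd X R)))
                  in if snd p then d else dinv X d)"

definition walk :: "nat \<Rightarrow> int \<times> bool \<Rightarrow> int \<times> bool" where
  "walk j p = (if snd p then fst p + int j else fst p - int j, snd p)"

definition lift :: "('v,'d,'f) cx2 \<Rightarrow> 'd list \<Rightarrow> 'f \<Rightarrow> int \<times> bool \<Rightarrow> bool" where
  "lift X P R p \<longleftrightarrow> (\<forall>j<length P. P ! j = odart X R (walk j p))"

text \<open>Cellular homeomorphisms of boundary circles: rotations (c + k) and
reflections (c - k, reversing orientation).\<close>
definition chom :: "int \<Rightarrow> bool \<Rightarrow> int \<times> bool \<Rightarrow> int \<times> bool" where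
  "chom c e p = (if e then (c + fst p, snd p) else (c - fst p, \<not> snd p))"

definition compatible_hom :: "('v,'d,'f) cx2 \<Rightarrow> 'f \<Rightarrow> 'f \<Rightarrow> int \<Rightarrow> bool \<Rightarrow> bool" where
  "compatible_hom X R1 R2 c e \<longleftrightarrow> length (bd X R1) = length (bd X R2) \<and>
     (\<forall>p. odart X R2 (chom c e p) = odart X R1 p)"

definition same_opos :: "nat \<Rightarrow> int \<times> bool \<Rightarrow> int \<times> bool \<Rightarrow> bool" where
  "same_opos n p q \<longleftrightarrow> fst p mod int n = fst q mod int n \<and> snd p = snd q"

definition piece :: "('v,'d,'f) cx2 \<Rightarrow> 'd list \<Rightarrow> bool" where
  "piece X P \<longleftrightarrow> P \<noteq> [] \<and> is_path X P \<and>
     (\<exists>R1 R2 p1 p2. R1 \<in> faces X \<and> R2 \<in> faces X \<and> lift X P R1 p1 \<and> lift X P R2 p2 \<and>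
        \<not> (\<exists>c e. compatible_hom X R1 R2 c e \<and>
                 same_opos (length (bd X R2)) (chom c e p1) p2))"

definition missing_3shell :: "('v,'d,'f) cx2 \<Rightarrow> ('v,'d,'f) subcx \<Rightarrow> 'f \<Rightarrow> bool" where
  "missing_3shell X Y R \<longleftrightarrow> R \<in> faces X \<and> R \<notin> sF Y \<and>
     (\<exists>k Q S Ps. rotate k (bd X R) = Q @ S \<and> set Q \<subseteq> sD Y \<and>
        (Q = [] \<longrightarrow> src X (hd S) \<in> sV Y) \<and>
        length Ps \<le> 3 \<and> (\<forall>P\<in>set Ps. piece X P) \<and> S = concat Ps)"

definition perimeter_reduction :: "('v,'d,'f) cx2 \<Rightarrow> bool" where
  "perimeter_reduction X \<longleftrightarrow>
     (\<forall>H Y. aut_subgroup X H \<and> rel_fin_gen X H \<and> is_subcx X Y \<and> connected_sub X Y \<and>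
            cocompact X H Y \<and> (\<exists>R. missing_3shell X Y R) \<longrightarrow>
        (\<exists>Y'. is_subcx X Y' \<and> connected_sub X Y' \<and> cocompact X H Y' \<and>
              per X Y' H < per X Y H))"

end

theory Submission
  imports Defs
begin

text \<open>Let H be generated by a finite set S together with the stabilisers of finitely many
0-cells vs.  As X is connected, a finite connected graph D through some 0-cell v0 reaches vs
and the points s v0 for s in S.  The H-translates of D form an H-cocompact subcomplex, and it
is connected: the g in H for which g v0 lies in the component of v0 form a subgroup containing
S and the stabilisers of vs, hence all of H.  Among the connected H-cocompact subcomplexes,
one of least perimeter has no missing 3-shell by the Perimeter-reduction hypothesis.\<close>

definition dart_graph :: "('v,'d,'f) cx2 \<Rightarrow> 'd set \<Rightarrow> ('v \<times> 'v) set" where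
  "dart_graph X D = {(src X d, tgt X d) | d. d \<in> D}"

lemma connected_sub_iff_dart_graph:
  "connected_sub X Y \<longleftrightarrow> sV Y \<noteq> {} \<and>
     (\<forall>u\<in>sV Y. \<forall>v\<in>sV Y. (u, v) \<in> (dart_graph X (sD Y))\<^sup>*)"
  unfolding connected_sub_def dart_graph_def by simp

lemma rtrancl_dart_graph_mono: "D \<subseteq> D' \<Longrightarrow> (dart_graph X D)\<^sup>* \<subseteq> (dart_graph X D')\<^sup>*"
  unfolding dart_graph_def by (rule rtrancl_mono) blast

lemma complex2_dinv:
  assumes "complex2 X" "d \<in> darts X"
  shows "dinv X d \<in> darts X" "dinv X (dinv X d) = d" "src X d \<in> verts X"
  using assms unfolding complex2_def by auto

lemma sym_rtrancl_dart_graph: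
  assumes "complex2 X" "D \<subseteq> darts X" "\<forall>d\<in>D. dinv X d \<in> D"
  shows "sym ((dart_graph X D)\<^sup>*)"
proof (rule sym_rtrancl, rule symI)
  fix u v assume "(u, v) \<in> dart_graph X D"
  then obtain d where d: "d \<in> D" "u = src X d" "v = tgt X d" unfolding dart_graph_def by blast
  then have "(v, u) = (src X (dinv X d), tgt X (dinv X d))"
    using assms complex2_dinv(2) by (fastforce simp: tgt_def)
  then show "(v, u) \<in> dart_graph X D" unfolding dart_graph_def using d assms(3) by blast
qed

definition rooted_darts :: "('v,'d,'f) cx2 \<Rightarrow> 'v \<Rightarrow> 'd set \<Rightarrow> bool" where
  "rooted_darts X a D \<longleftrightarrow> finite D \<and> D \<subseteq> darts X \<and> (\<forall>d\<in>D. dinv X d \<in> D) \<and>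
     (\<forall>d\<in>D. (a, src X d) \<in> (dart_graph X D)\<^sup>*)"

lemma rooted_darts_empty: "rooted_darts X a {}"
  unfolding rooted_darts_def by simp

lemma rooted_darts_Un:
  assumes "rooted_darts X a D" "rooted_darts X a D'"
  shows "rooted_darts X a (D \<union> D')"
proof -
  have "(dart_graph X D)\<^sup>* \<subseteq> (dart_graph X (D \<union> D'))\<^sup>*"
    and "(dart_graph X D')\<^sup>* \<subseteq> (dart_graph X (D \<union> D'))\<^sup>*"
    by (simp_all add: rtrancl_dart_graph_mono)
  with assms show ?thesis unfolding rooted_darts_def by blast
qed

lemma rooted_darts_insert_edge:
  assumes X: "complex2 X" and D: "rooted_darts X a D" and d: "d \<in> darts X"
    and reach: "(a, src X d) \<in> (dart_graph X D)\<^sup>*"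
  shows "rooted_darts X a (D \<union> {d, dinv X d})"
    and "(a, tgt X d) \<in> (dart_graph X (D \<union> {d, dinv X d}))\<^sup>*"
proof -
  let ?D' = "D \<union> {d, dinv X d}"
  have to_src: "(a, src X d) \<in> (dart_graph X ?D')\<^sup>*"
    using reach rtrancl_dart_graph_mono[of D ?D' X] by blast
  have "(src X d, tgt X d) \<in> dart_graph X ?D'" unfolding dart_graph_def by blast
  with to_src show to_tgt: "(a, tgt X d) \<in> (dart_graph X ?D')\<^sup>*" by (rule rtrancl_into_rtrancl)
  have "(a, src X e) \<in> (dart_graph X ?D')\<^sup>*" if "e \<in> ?D'" for e
    using that D to_src to_tgt rtrancl_dart_graph_mono[of D ?D' X]
    unfolding rooted_darts_def tgt_def by auto
  then show "rooted_darts X a ?D'"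
    using D d complex2_dinv[OF X d] unfolding rooted_darts_def by auto
qed

lemma rooted_darts_reaching:
  assumes X: "complex2 X" and "(a, b) \<in> (dart_graph X (darts X))\<^sup>*"
  shows "\<exists>D. rooted_darts X a D \<and> (a, b) \<in> (dart_graph X D)\<^sup>*"
  using assms(2)
proof (induction rule: rtrancl_induct)
  case base
  show ?case using rooted_darts_empty[of X a] by blast
next
  case (step b c)
  then obtain D where D: "rooted_darts X a D" "(a, b) \<in> (dart_graph X D)\<^sup>*" by blast
  from step(2) obtain d where "d \<in> darts X" "b = src X d" "c = tgt X d"
    unfolding dart_graph_def by blast
  with rooted_darts_insert_edge[OF X D(1)] D(2) show ?case by blast
qed

lemma rooted_darts_reaching_finite:
  assumes X: "complex2 X" and "finite T" and "\<forall>t\<in>T. (a, t) \<in> (dart_graph X (darts X))\<^sup>*"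
  shows "\<exists>D. rooted_darts X a D \<and> (\<forall>t\<in>T. (a, t) \<in> (dart_graph X D)\<^sup>*)"
  using assms(2,3)
proof (induction rule: finite_induct)
  case empty
  show ?case using rooted_darts_empty[of X a] by blast
next
  case (insert t T)
  then obtain D where D: "rooted_darts X a D" "\<forall>u\<in>T. (a, u) \<in> (dart_graph X D)\<^sup>*" by auto
  obtain D' where D': "rooted_darts X a D'" "(a, t) \<in> (dart_graph X D')\<^sup>*"
    using rooted_darts_reaching[OF X] insert.prems by blast
  have "rooted_darts X a (D \<union> D')" using rooted_darts_Un[OF D(1) D'(1)] .
  moreover have "\<forall>u\<in>insert t T. (a, u) \<in> (dart_graph X (D \<union> D'))\<^sup>*"
    using D(2) D'(2) rtrancl_dart_graph_mono[of D "D \<union> D'" X]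
      rtrancl_dart_graph_mono[of D' "D \<union> D'" X] by blast
  ultimately show ?case by blast
qed

lemma is_autD:
  assumes "is_aut X g" "d \<in> darts X"
  shows "src X (ad g d) = av g (src X d)" "ad g (dinv X d) = dinv X (ad g d)"
  using assms unfolding is_aut_def by blast+

lemma is_aut_in_cells:
  assumes "is_aut X g"
  shows "v \<in> verts X \<Longrightarrow> av g v \<in> verts X" "d \<in> darts X \<Longrightarrow> ad g d \<in> darts X"
  using assms unfolding is_aut_def bij_betw_def by blast+

lemma tgt_aut:
  "is_aut X g \<Longrightarrow> complex2 X \<Longrightarrow> d \<in> darts X \<Longrightarrow> tgt X (ad g d) = av g (tgt X d)"
  using is_autD complex2_dinv(1) unfolding tgt_def by metis

lemma rtrancl_dart_graph_aut:
  assumes X: "complex2 X" and g: "is_aut X g" and D: "D \<subseteq> darts X" "ad g ` D \<subseteq> D"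
    and "(a, b) \<in> (dart_graph X D)\<^sup>*"
  shows "(av g a, av g b) \<in> (dart_graph X D)\<^sup>*"
  using assms(5)
proof (induction rule: rtrancl_induct)
  case (step b c)
  from step(2) obtain d where d: "d \<in> D" "b = src X d" "c = tgt X d"
    unfolding dart_graph_def by blast
  then have "(av g b, av g c) = (src X (ad g d), tgt X (ad g d))"
    using D is_autD(1)[OF g] tgt_aut[OF g X] by auto
  then have "(av g b, av g c) \<in> dart_graph X D" unfolding dart_graph_def using d D by blast
  with step(3) show ?case by (rule rtrancl_into_rtrancl)
qed simp

lemma av_aut_comp [simp]: "av (aut_comp g h) = av g \<circ> av h"
  and ad_aut_comp [simp]: "ad (aut_comp g h) = ad g \<circ> ad h"
  by (simp_all add: aut_comp_def)

lemma av_aut_inverse: "aut_comp h g = aut_id \<Longrightarrow> av h (av g x) = x"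
  and ad_aut_inverse: "aut_comp h g = aut_id \<Longrightarrow> ad h (ad g y) = y"
  by (drule arg_cong[where f = av] arg_cong[where f = ad], simp add: aut_id_def fun_eq_iff)+

lemma aut_subgroupD:
  assumes "aut_subgroup X H"
  shows "g \<in> H \<Longrightarrow> is_aut X g" "aut_id \<in> H"
    "g \<in> H \<Longrightarrow> h \<in> H \<Longrightarrow> aut_comp g h \<in> H"
    "g \<in> H \<Longrightarrow> \<exists>h\<in>H. aut_comp h g = aut_id"
  using assms unfolding aut_subgroup_def by blast+

lemma generates_subgroup_eq:
  "generates X A H \<Longrightarrow> K \<subseteq> H \<Longrightarrow> aut_subgroup X K \<Longrightarrow> A \<subseteq> K \<Longrightarrow> K = H"
  unfolding generates_def by blast

lemma orbV_av:
  assumes H: "aut_subgroup X H" and g: "g \<in> H"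
  shows "orbV H (av g w) = orbV H w"
proof -
  have sub: "orbV H (av k w') \<subseteq> orbV H w'" if k: "k \<in> H" for k w'
  proof
    fix x assume "x \<in> orbV H (av k w')"
    then obtain l where "l \<in> H" "x = av (aut_comp l k) w'" unfolding orbV_def by auto
    then show "x \<in> orbV H w'" unfolding orbV_def using aut_subgroupD(3)[OF H _ k] by blast
  qed
  obtain h where h: "h \<in> H" "aut_comp h g = aut_id" using aut_subgroupD(4)[OF H g] by blast
  have "orbV H w \<subseteq> orbV H (av g w)"
    using sub[OF h(1), of "av g w"] av_aut_inverse[OF h(2)] by simp
  with sub[OF g] show ?thesis by blast
qed

lemma orb1_image_ad:
  assumes H: "aut_subgroup X H" and g: "g \<in> H"
  shows "orb1 X H (ad g ` x) = orb1 X H x"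
proof -
  have sub: "orb1 X H (ad k ` x') \<subseteq> orb1 X H x'" if k: "k \<in> H" for k x'
  proof
    fix y assume "y \<in> orb1 X H (ad k ` x')"
    then obtain l e where "l \<in> H" "e \<in> x'" "y = edge X (ad (aut_comp l k) e)"
      unfolding orb1_def by auto
    then show "y \<in> orb1 X H x'" unfolding orb1_def using aut_subgroupD(3)[OF H _ k] by blast
  qed
  obtain h where h: "h \<in> H" "aut_comp h g = aut_id" using aut_subgroupD(4)[OF H g] by blast
  have "ad h ` ad g ` x = x" using ad_aut_inverse[OF h(2)] by (simp add: image_image)
  then have "orb1 X H x \<subseteq> orb1 X H (ad g ` x)" using sub[OF h(1), of "ad g ` x"] by simp
  with sub[OF g] show ?thesis by blast
qed

lemma orb1_edge_ad:
  assumes H: "aut_subgroup X H" and g: "g \<in> H" and d: "d \<in> darts X"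
  shows "orb1 X H (edge X (ad g d)) = orb1 X H (edge X d)"
proof -
  have "edge X (ad g d) = ad g ` edge X d"
    using is_autD(2)[OF aut_subgroupD(1)[OF H g] d] by (simp add: edge_def)
  then show ?thesis using orb1_image_ad[OF H g] by simp
qed

lemma sym_rtrancl_dart_graph_subcx:
  "complex2 X \<Longrightarrow> is_subcx X Y \<Longrightarrow> sym ((dart_graph X (sD Y))\<^sup>*)"
  by (rule sym_rtrancl_dart_graph) (auto simp: is_subcx_def)

lemma rtrancl_dart_graph_invariant:
  assumes X: "complex2 X" and H: "aut_subgroup X H" and Y: "is_subcx X Y" "invariant H Y"
    and g: "g \<in> H" and ab: "(a, b) \<in> (dart_graph X (sD Y))\<^sup>*"
  shows "(av g a, av g b) \<in> (dart_graph X (sD Y))\<^sup>*"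
proof (rule rtrancl_dart_graph_aut[OF X aut_subgroupD(1)[OF H g] _ _ ab])
  show "sD Y \<subseteq> darts X" using Y(1) unfolding is_subcx_def by blast
  show "ad g ` sD Y \<subseteq> sD Y" using Y(2) g unfolding invariant_def by blast
qed

lemma aut_subgroup_reaching_elements:
  assumes X: "complex2 X" and H: "aut_subgroup X H" and Y: "is_subcx X Y" "invariant H Y"
  shows "aut_subgroup X {g \<in> H. (v0, av g v0) \<in> (dart_graph X (sD Y))\<^sup>*}"
    (is "aut_subgroup X ?K")
  unfolding aut_subgroup_def
proof (intro conjI ballI)
  let ?R = "(dart_graph X (sD Y))\<^sup>*"
  note move = rtrancl_dart_graph_invariant[OF X H Y]
  show "is_aut X g" if "g \<in> ?K" for g using that aut_subgroupD(1)[OF H] by blast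
  show "aut_id \<in> ?K" using aut_subgroupD(2)[OF H] by (simp add: aut_id_def)
  show "aut_comp g h \<in> ?K" if g: "g \<in> ?K" and h: "h \<in> ?K" for g h
  proof -
    have "(v0, av g v0) \<in> ?R" using g by simp
    also have "(av g v0, av g (av h v0)) \<in> ?R" using move g h by simp
    finally show ?thesis using g h aut_subgroupD(3)[OF H] by simp
  qed
  show "\<exists>h\<in>?K. aut_comp h g = aut_id" if g: "g \<in> ?K" for g
  proof -
    obtain h where h: "h \<in> H" "aut_comp h g = aut_id" using g aut_subgroupD(4)[OF H] by blast
    have "(av h v0, v0) \<in> ?R"
      using move[OF h(1), of v0 "av g v0"] g av_aut_inverse[OF h(2)] by simp
    then have "(v0, av h v0) \<in> ?R"
      using sym_rtrancl_dart_graph_subcx[OF X Y(1)] by (rule symD[rotated])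
    then show ?thesis using h by blast
  qed
qed

lemma connected_sub_invariant:
  assumes X: "complex2 X" and H: "aut_subgroup X H"
    and gen: "generates X (S \<union> (\<Union>v\<in>vs. stab H v)) H"
    and Y: "is_subcx X Y" "invariant H Y" and v0: "v0 \<in> sV Y"
    and VY: "sV Y \<subseteq> {av g w | g w. g \<in> H \<and> (v0, w) \<in> (dart_graph X (sD Y))\<^sup>*}"
    and vs: "\<forall>v\<in>vs. (v0, v) \<in> (dart_graph X (sD Y))\<^sup>*"
    and S: "\<forall>s\<in>S. (v0, av s v0) \<in> (dart_graph X (sD Y))\<^sup>*"
  shows "connected_sub X Y"
proof -
  let ?R = "(dart_graph X (sD Y))\<^sup>*"
  let ?K = "{g \<in> H. (v0, av g v0) \<in> ?R}"
  note move = rtrancl_dart_graph_invariant[OF X H Y]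
  have reverse: "(b, a) \<in> ?R" if "(a, b) \<in> ?R" for a b
    using sym_rtrancl_dart_graph_subcx[OF X Y(1)] that by (rule symD)
  have "g \<in> ?K" if g: "g \<in> stab H v" and v: "v \<in> vs" for g v
  proof -
    have g': "g \<in> H" "av g v = v" using g unfolding stab_def by auto
    have v0_v: "(v0, v) \<in> ?R" using vs v by blast
    have "(v, av g v0) \<in> ?R" using reverse move[OF g'(1) v0_v] g'(2) by simp
    with v0_v have "(v0, av g v0) \<in> ?R" by (rule rtrancl_trans)
    with g'(1) show ?thesis by simp
  qed
  then have "S \<union> (\<Union>v\<in>vs. stab H v) \<subseteq> ?K"
    using S gen unfolding generates_def by blast
  then have K: "?K = H"
    by (intro generates_subgroup_eq[OF gen _ aut_subgroup_reaching_elements[OF X H Y]]) auto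
  have reach: "(v0, u) \<in> ?R" if u: "u \<in> sV Y" for u
  proof -
    obtain g w where gw: "g \<in> H" "(v0, w) \<in> ?R" "u = av g w" using VY u by blast
    have "(v0, av g v0) \<in> ?R" using K gw(1) by blast
    also have "(av g v0, u) \<in> ?R" using move gw by simp
    finally show ?thesis .
  qed
  have "(u, v) \<in> ?R" if "u \<in> sV Y" "v \<in> sV Y" for u v
    using reverse[OF reach[OF that(1)]] reach[OF that(2)] by (rule rtrancl_trans)
  with v0 show ?thesis unfolding connected_sub_iff_dart_graph by blast
qed

definition orbit_subcx :: "('v,'d,'f) aut set \<Rightarrow> 'v set \<Rightarrow> 'd set \<Rightarrow> ('v,'d,'f) subcx" where
  "orbit_subcx H W D = ({av g w | g w. g \<in> H \<and> w \<in> W}, {ad g d | g d. g \<in> H \<and> d \<in> D}, {})"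

lemma orbit_subcx_simps [simp]:
  "sV (orbit_subcx H W D) = {av g w | g w. g \<in> H \<and> w \<in> W}"
  "sD (orbit_subcx H W D) = {ad g d | g d. g \<in> H \<and> d \<in> D}"
  "sF (orbit_subcx H W D) = {}"
  by (simp_all add: orbit_subcx_def sV_def sD_def sF_def)

lemma subset_orbit_subcx:
  assumes "aut_subgroup X H"
  shows "W \<subseteq> sV (orbit_subcx H W D)" "D \<subseteq> sD (orbit_subcx H W D)"
  using aut_subgroupD(2)[OF assms] by (force simp: aut_id_def)+

lemma invariant_orbit_subcx:
  assumes H: "aut_subgroup X H"
  shows "invariant H (orbit_subcx H W D)"
  unfolding invariant_def
proof (intro ballI conjI)
  fix g assume g: "g \<in> H"
  show "av g ` sV (orbit_subcx H W D) \<subseteq> sV (orbit_subcx H W D)"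
  proof
    fix u assume "u \<in> av g ` sV (orbit_subcx H W D)"
    then obtain h w where "h \<in> H" "w \<in> W" "u = av (aut_comp g h) w" by auto
    then show "u \<in> sV (orbit_subcx H W D)"
      using aut_subgroupD(3)[OF H g] by (simp only: orbit_subcx_simps) blast
  qed
  show "ad g ` sD (orbit_subcx H W D) \<subseteq> sD (orbit_subcx H W D)"
  proof
    fix e assume "e \<in> ad g ` sD (orbit_subcx H W D)"
    then obtain h d where "h \<in> H" "d \<in> D" "e = ad (aut_comp g h) d" by auto
    then show "e \<in> sD (orbit_subcx H W D)"
      using aut_subgroupD(3)[OF H g] by (simp only: orbit_subcx_simps) blast
  qed
qed simp

lemma is_subcx_orbit_subcx:
  assumes X: "complex2 X" and H: "aut_subgroup X H" and W: "W \<subseteq> verts X"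
    and D: "D \<subseteq> darts X" "\<forall>d\<in>D. dinv X d \<in> D" "src X ` D \<subseteq> W"
  shows "is_subcx X (orbit_subcx H W D)"
  unfolding is_subcx_def
proof (intro conjI ballI)
  note aut = aut_subgroupD(1)[OF H]
  show "sV (orbit_subcx H W D) \<subseteq> verts X" using W is_aut_in_cells(1)[OF aut] by auto
  show "sD (orbit_subcx H W D) \<subseteq> darts X" using D(1) is_aut_in_cells(2)[OF aut] by auto
  fix e assume "e \<in> sD (orbit_subcx H W D)"
  then obtain g d where gd: "g \<in> H" "d \<in> D" "e = ad g d" by auto
  have "dinv X e = ad g (dinv X d)" "src X e = av g (src X d)"
    using is_autD[OF aut[OF gd(1)]] gd D(1) by auto
  moreover have "dinv X d \<in> D" "src X d \<in> W" using gd(2) D by auto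
  ultimately show "dinv X e \<in> sD (orbit_subcx H W D)" "src X e \<in> sV (orbit_subcx H W D)"
    using gd(1) by auto
qed simp_all

lemma cocompact_orbit_subcx:
  assumes H: "aut_subgroup X H" and "finite W" "finite D" "D \<subseteq> darts X"
  shows "cocompact X H (orbit_subcx H W D)"
proof -
  have "orbV H ` sV (orbit_subcx H W D) \<subseteq> orbV H ` W"
    using orbV_av[OF H] by auto
  then have "finite (orbV H ` sV (orbit_subcx H W D))"
    using \<open>finite W\<close> by (rule finite_subset[OF _ finite_imageI])
  moreover have "orb1 X H ` edge X ` sD (orbit_subcx H W D) \<subseteq> orb1 X H ` edge X ` D"
    using orb1_edge_ad[OF H] assms(4) by auto
  then have "finite (orb1 X H ` edge X ` sD (orbit_subcx H W D))"
    using \<open>finite D\<close> by (simp add: finite_subset)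
  ultimately show ?thesis
    using invariant_orbit_subcx[OF H] unfolding cocompact_def by simp
qed

lemma ex_connected_cocompact_subcx:
  assumes X: "complex2 X" and conn: "connected_cx X"
    and H: "aut_subgroup X H" and fg: "rel_fin_gen X H"
  shows "\<exists>Y. is_subcx X Y \<and> connected_sub X Y \<and> cocompact X H Y"
proof -
  obtain vs S where vs: "finite vs" "vs \<subseteq> verts X" and S: "finite S" "S \<subseteq> H"
    and gen: "generates X (S \<union> (\<Union>v\<in>vs. stab H v)) H"
    using fg unfolding rel_fin_gen_def by blast
  have reach_X: "(u, v) \<in> (dart_graph X (darts X))\<^sup>*" if "u \<in> verts X" "v \<in> verts X" for u v
    using conn that
    unfolding connected_cx_def connected_sub_iff_dart_graph the_whole_def sV_def sD_def by auto
  obtain v0 where v0: "v0 \<in> verts X"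
    using conn unfolding connected_cx_def connected_sub_def the_whole_def sV_def by auto
  let ?T = "vs \<union> (\<lambda>s. av s v0) ` S"
  have "?T \<subseteq> verts X"
    using vs(2) S(2) v0 is_aut_in_cells(1)[OF aut_subgroupD(1)[OF H]] by blast
  then obtain D where D: "rooted_darts X v0 D" and T: "\<forall>t\<in>?T. (v0, t) \<in> (dart_graph X D)\<^sup>*"
    using rooted_darts_reaching_finite[OF X, of ?T v0] vs(1) S(1) reach_X v0 by blast
  let ?W = "insert v0 (src X ` D)"
  let ?Y = "orbit_subcx H ?W D"
  have W: "?W \<subseteq> verts X" using D v0 complex2_dinv(3)[OF X] unfolding rooted_darts_def by blast
  have Y: "is_subcx X ?Y" "cocompact X H ?Y"
    using is_subcx_orbit_subcx[OF X H W] cocompact_orbit_subcx[OF H] D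
    unfolding rooted_darts_def by auto
  have mono: "(dart_graph X D)\<^sup>* \<subseteq> (dart_graph X (sD ?Y))\<^sup>*"
    using rtrancl_dart_graph_mono subset_orbit_subcx(2)[OF H] by blast
  have "\<forall>w\<in>?W. (v0, w) \<in> (dart_graph X D)\<^sup>*" using D unfolding rooted_darts_def by blast
  then have "sV ?Y \<subseteq> {av g w | g w. g \<in> H \<and> (v0, w) \<in> (dart_graph X (sD ?Y))\<^sup>*}"
    using mono by auto
  moreover have "v0 \<in> sV ?Y" using subset_orbit_subcx(1)[OF H] by blast
  ultimately have "connected_sub X ?Y"
    using connected_sub_invariant[OF X H gen Y(1) invariant_orbit_subcx[OF H]] T mono by blast
  with Y show ?thesis by blast
qed

theorem lemma3p22:
  fixes X :: "('v,'d,'f) cx2" and H :: "('v,'d,'f) aut set"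
  assumes "complex2 X" and "connected_cx X" and "thin X"
    and "perimeter_reduction X"
    and "aut_subgroup X H" and "rel_fin_gen X H"
  shows "\<exists>Y. is_subcx X Y \<and> connected_sub X Y \<and> cocompact X H Y \<and>
             \<not> (\<exists>R. missing_3shell X Y R)"
proof -
  let ?admissible = "\<lambda>Y. is_subcx X Y \<and> connected_sub X Y \<and> cocompact X H Y"
  obtain Y0 where "?admissible Y0"
    using ex_connected_cocompact_subcx[OF assms(1,2,5,6)] by blast
  from ex_has_least_nat[of ?admissible, OF this, of "\<lambda>Y. per X Y H"]
  obtain Y where Y: "?admissible Y"
    and least: "\<And>Y'. ?admissible Y' \<Longrightarrow> per X Y H \<le> per X Y' H"
    by blast
  have "\<not> (\<exists>R. missing_3shell X Y R)"
  proof
    assume "\<exists>R. missing_3shell X Y R"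
    then obtain Y' where "?admissible Y'" "per X Y' H < per X Y H"
      using assms(4-6) Y unfolding perimeter_reduction_def by blast
    with least show False by (simp add: not_le[symmetric])
  qed
  with Y show ?thesis by blast
qed

end
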